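(* Let $M$ be a proper metric space and $X_1,\dots,X_n$ a coarsely transverse collection of half spaces in $M$. For $\sigma\in S_n$ put $A_0^\sigma=X_{\sigma_1}\cdots X_{\sigma_n}$ and $A_i^\sigma=X_{\sigma_i}^cX_{\sigma_{i+1}}\cdots X_{\sigma_n}$ ($i=1,\dots,n$), and $A_i=A_i^{\mathrm{id}}$. Then for every $\sigma\in S_n$, $$[A_0^\sigma\wedge\dots\wedge A_n^\sigma]=\mathrm{sgn}(\sigma)\,[A_0\wedge\dots\wedge A_n]\in HX^n(M).$$
   Context: Borel sets are identified with their indicator functions. For $Y\subseteq M$, $Y_R=\{x:d(x,Y)\le R\}$. Borel sets $X_1,\dots,X_n$ form a coarsely transverse collection of half spaces if $\bigcap_i (X_i)_R\cap(X_i^c)_R$ is bounded for all $R\ge0$. Coarse cohomology: equip $M^{n+1}$ with the max metric, $\Delta_R$ the $R$-thickening of the multi-diagonal. $CX^n(M)$ consists of locally bounded Borel functions $\theta:M^{n+1}\to\mathbb{C}$ with $\mathrm{supp}(\theta)\cap\Delta_R$ bounded for all $R>0$, with differential $\delta\theta=\sum_{i=0}^{n+1}(-1)^i\pi_i^*\theta$ ($\pi_i$ omits the $i$-th coordinate); $HX^n(M)$ is its cohomology. For bounded Borel $f_j$, $f_0\wedge\dots\wedge f_n=\sum_{\tau\in S_{n+1}}\mathrm{sgn}(\tau)f_{\tau_0}\otimes\dots\otimes f_{\tau_n}$. Each $A^\sigma_0\wedge\dots\wedge A^\sigma_n$ is a coarse cocycle. *)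

theory Defs
  imports "HOL-Analysis.Analysis" "HOL-Combinatorics.Permutations"
begin

text \<open>Points of M^(n+1) are extensional functions on {..n}; the space is PiE {..n} (\<lambda>_. UNIV).\<close>

definition prodsp :: "nat \<Rightarrow> (nat \<Rightarrow> 'a) set" where
  "prodsp n = PiE {..n} (\<lambda>_. UNIV)"

definition dmax :: "nat \<Rightarrow> (nat \<Rightarrow> 'a::metric_space) \<Rightarrow> (nat \<Rightarrow> 'a) \<Rightarrow> real" where
  "dmax n x y = Max ((\<lambda>i. dist (x i) (y i)) ` {..n})"

definition bounded_prod :: "nat \<Rightarrow> (nat \<Rightarrow> 'a::metric_space) set \<Rightarrow> bool" where
  "bounded_prod n S \<longleftrightarrow> (\<exists>z \<in> prodsp n. \<exists>r. \<forall>x\<in>S. dmax n x z \<le> r)"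

definition diag_thick :: "nat \<Rightarrow> real \<Rightarrow> (nat \<Rightarrow> 'a::metric_space) set" where
  "diag_thick n R = {x \<in> prodsp n. \<exists>m. dmax n x (\<lambda>_. m) \<le> R}"

definition locally_bounded_prod :: "nat \<Rightarrow> ((nat \<Rightarrow> 'a::metric_space) \<Rightarrow> complex) \<Rightarrow> bool" where
  "locally_bounded_prod n \<theta> \<longleftrightarrow>
     (\<forall>S \<subseteq> prodsp n. bounded_prod n S \<longrightarrow> (\<exists>C. \<forall>x\<in>S. norm (\<theta> x) \<le> C))"

definition CX :: "nat \<Rightarrow> ((nat \<Rightarrow> 'a::metric_space) \<Rightarrow> complex) set" where
  "CX n = {\<theta>. \<theta> \<in> borel_measurable (PiM {..n} (\<lambda>_. borel))
              \<and> locally_bounded_prod n \<theta>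
              \<and> (\<forall>R>0. bounded_prod n ({x \<in> prodsp n. \<theta> x \<noteq> 0} \<inter> diag_thick n R))}"

definition face :: "nat \<Rightarrow> nat \<Rightarrow> (nat \<Rightarrow> 'a) \<Rightarrow> (nat \<Rightarrow> 'a)" where
  "face n i x = restrict (\<lambda>j. if j < i then x j else x (Suc j)) {..n}"

definition cobdry :: "nat \<Rightarrow> ((nat \<Rightarrow> 'a) \<Rightarrow> complex) \<Rightarrow> (nat \<Rightarrow> 'a) \<Rightarrow> complex" where
  "cobdry n \<theta> x = (\<Sum>i\<le>Suc n. (-1) ^ i * \<theta> (face n i x))"

text \<open>Equality of classes in HX^n(M) of two cochains in CX^n (difference is a coboundary)\<close>
definition same_class :: "nat \<Rightarrow> ((nat \<Rightarrow> 'a::metric_space) \<Rightarrow> complex) \<Rightarrow> ((nat \<Rightarrow> 'a) \<Rightarrow> complex) \<Rightarrow> bool" where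
  "same_class n \<theta>1 \<theta>2 \<longleftrightarrow>
     (if n = 0 then (\<forall>x\<in>prodsp 0. \<theta>1 x = \<theta>2 x)
      else (\<exists>\<psi>\<in>CX (n - 1). \<forall>x\<in>prodsp n. \<theta>1 x - \<theta>2 x = cobdry (n - 1) \<psi> x))"

definition wedge :: "nat \<Rightarrow> (nat \<Rightarrow> 'a \<Rightarrow> complex) \<Rightarrow> (nat \<Rightarrow> 'a) \<Rightarrow> complex" where
  "wedge n f x = (\<Sum>\<tau>\<in>{\<tau>. \<tau> permutes {..n}}. of_int (sign \<tau>) * (\<Prod>i\<le>n. f (\<tau> i) (x i)))"

text \<open>Y_R = {x. d(x,Y) \<le> R}, with d(x,{}) = \<infinity>\<close>
definition thick :: "'a::metric_space set \<Rightarrow> real \<Rightarrow> 'a set" where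
  "thick Y R = {x. Y \<noteq> {} \<and> infdist x Y \<le> R}"

definition coarsely_transverse :: "nat \<Rightarrow> (nat \<Rightarrow> 'a::metric_space set) \<Rightarrow> bool" where
  "coarsely_transverse n X \<longleftrightarrow>
     (\<forall>i\<in>{1..n}. X i \<in> sets borel) \<and>
     (\<forall>R\<ge>0. bounded (\<Inter>i\<in>{1..n}. thick (X i) R \<inter> thick (- X i) R))"

definition Aset :: "nat \<Rightarrow> (nat \<Rightarrow> 'a set) \<Rightarrow> (nat \<Rightarrow> nat) \<Rightarrow> nat \<Rightarrow> 'a set" where
  "Aset n X \<sigma> i = (if i = 0 then (\<Inter>k\<in>{1..n}. X (\<sigma> k))
                    else - X (\<sigma> i) \<inter> (\<Inter>k\<in>{i+1..n}. X (\<sigma> k)))"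

end

theory Submission
  imports Defs "Jordan_Normal_Form.Determinant"
begin

text \<open>Every point lies in exactly one of the sets \<open>A\<^sub>0\<^sup>\<sigma>, \<dots>, A\<^sub>n\<^sup>\<sigma>\<close>; call its index the
  \<open>\<sigma>\<close>-label of the point. Evaluated at \<open>(x\<^sub>0, \<dots>, x\<^sub>n)\<close>, the wedge of the indicators of the
  \<open>A\<^sub>i\<^sup>\<sigma>\<close> is the Levi-Civita symbol of the labels of \<open>x\<^sub>0, \<dots>, x\<^sub>n\<close>. Call a labelling
  adapted to \<open>\<sigma>\<close> if label \<open>0\<close> occurs only inside every \<open>X\<^sub>j\<close> and label \<open>c > 0\<close> only outside
  \<open>X\<^bsub>\<sigma> c\<^esub>\<close>. The \<open>\<sigma>\<close>-labels are adapted, and so are the \<open>id\<close>-labels relabelled by \<open>\<sigma>\<^sup>-\<^sup>1\<close>;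
  the relabelling multiplies the Levi-Civita symbol by \<open>sign \<sigma>\<close>.

  Any two adapted labellings give cohomologous cocycles: the prism operator of the standard
  triangulation of \<open>\<Delta>\<^sup>n\<^sup>-\<^sup>1 \<times> \<Delta>\<^sup>1\<close> is a chain homotopy between them, since the Levi-Civita symbol
  is a simplicial cocycle. It is a coarse cochain: it vanishes unless the labels on the tuple
  exhaust \<open>{0..n}\<close>, and then the tuple meets both sides of every \<open>X\<^sub>j\<close>, so near the diagonal coarse
  transversality confines it to a bounded set.\<close>

definition levi_civita :: "nat \<Rightarrow> (nat \<Rightarrow> nat) \<Rightarrow> complex" where
  "levi_civita n t =
     (\<Sum>\<tau>\<in>{\<tau>. \<tau> permutes {..n}}. of_int (sign \<tau>) * (\<Prod>i\<le>n. of_bool (t i = \<tau> i)))"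

lemma levi_civita_cong:
  "(\<And>i. i \<le> n \<Longrightarrow> t i = t' i) \<Longrightarrow> levi_civita n t = levi_civita n t'"
  unfolding levi_civita_def by (intro sum.cong refl arg_cong[where f="\<lambda>z. _ * z"] prod.cong) auto

lemma levi_civita_eq_det:
  "levi_civita n t = det (mat (Suc n) (Suc n) (\<lambda>(i, j). of_bool (t i = j)))"
proof -
  have "{..n} = {0..<Suc n}" by auto
  then show ?thesis
    unfolding levi_civita_def det_def'[of _ "Suc n", OF mat_carrier]
    by (intro sum.cong refl arg_cong[where f="\<lambda>z. _ * z"] prod.cong)
      (auto dest: permutes_in_image)
qed

text \<open>Laplace expansion along the first column of the matrix whose \<open>i\<close>-th row is \<open>(1, e\<^bsub>u i\<^esub>)\<close>;
  this matrix is singular, as its first column is the sum of the others.\<close>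
lemma levi_civita_face_sum:
  assumes u: "\<And>i. i \<le> Suc n \<Longrightarrow> u i \<le> n"
  shows "(\<Sum>j\<le>Suc n. (-1)^j * levi_civita n (\<lambda>k. u (if k < j then k else Suc k))) = 0"
proof -
  let ?N = "Suc (Suc n)"
  define B :: "complex mat" where
    "B = mat ?N ?N (\<lambda>(i, j). if j = 0 then 1 else of_bool (u i = j - 1))"
  define v :: "complex vec" where "v = vec ?N (\<lambda>j. if j = 0 then 1 else -1)"
  have B: "B \<in> carrier_mat ?N ?N" unfolding B_def by simp
  have minor: "mat_delete B j 0 =
      mat (Suc n) (Suc n) (\<lambda>(i, k). of_bool (u (if i < j then i else Suc i) = k))"
    if "j < ?N" for j
    unfolding mat_delete_def B_def using that by (intro eq_matI) auto
  have "det B = (\<Sum>j<?N. B $$ (j, 0) * cofactor B j 0)"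
    by (rule laplace_expansion_column[OF B]) simp
  also have "\<dots> = (\<Sum>j\<le>Suc n. (-1)^j * levi_civita n (\<lambda>k. u (if k < j then k else Suc k)))"
    unfolding lessThan_Suc_atMost[symmetric]
    by (intro sum.cong refl) (simp add: cofactor_def minor levi_civita_eq_det, simp add: B_def)
  finally have expansion:
    "det B = (\<Sum>j\<le>Suc n. (-1)^j * levi_civita n (\<lambda>k. u (if k < j then k else Suc k)))" .
  have "B *\<^sub>v v = 0\<^sub>v ?N"
  proof (intro eq_vecI)
    fix i assume "i < dim_vec (0\<^sub>v ?N :: complex vec)"
    then have i: "i < ?N" by simp
    have "(\<Sum>j<Suc n. (of_bool (u i = j) :: complex)) = (\<Sum>j<Suc n. if j = u i then 1 else 0)"
      by (rule sum.cong) auto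
    also have "\<dots> = 1" using u[of i] i by (simp add: sum.delta)
    finally have row: "(\<Sum>j<Suc n. (of_bool (u i = j) :: complex)) = 1" .
    have "(B *\<^sub>v v) $ i = (\<Sum>j<?N. B $$ (i, j) * v $ j)"
      using i unfolding mult_mat_vec_def scalar_prod_def B_def v_def by (simp add: atLeast0LessThan)
    also have "\<dots> = 1 - (\<Sum>j<Suc n. (of_bool (u i = j) :: complex))"
      using i by (subst sum.lessThan_Suc_shift) (simp add: B_def v_def sum_negf)
    finally show "(B *\<^sub>v v) $ i = 0\<^sub>v ?N $ i" using i row by simp
  qed (simp add: B_def)
  moreover have "v \<in> carrier_vec ?N" "v \<noteq> 0\<^sub>v ?N"
    unfolding v_def by (auto simp: vec_eq_iff)
  ultimately have "det B = 0"
    using det_0_iff_vec_prod_zero_field[OF B] by blast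
  then show ?thesis using expansion by simp
qed

lemma levi_civita_permute:
  assumes \<pi>: "\<pi> permutes {..n}"
  shows "levi_civita n (\<lambda>i. \<pi> (t i)) = of_int (sign \<pi>) * levi_civita n t"
proof -
  let ?P = "{\<tau>. \<tau> permutes {..n}}"
  have bij: "bij_betw ((\<circ>) \<pi>) ?P ?P"
  proof (rule bij_betw_byWitness[where f'="(\<circ>) (Hilbert_Choice.inv \<pi>)"])
    show "\<forall>\<tau>\<in>?P. Hilbert_Choice.inv \<pi> \<circ> (\<pi> \<circ> \<tau>) = \<tau>"
      and "\<forall>\<tau>\<in>?P. \<pi> \<circ> (Hilbert_Choice.inv \<pi> \<circ> \<tau>) = \<tau>"
      using permutes_inv_o[OF \<pi>] by (simp_all add: o_assoc)
    show "(\<circ>) \<pi> ` ?P \<subseteq> ?P" "(\<circ>) (Hilbert_Choice.inv \<pi>) ` ?P \<subseteq> ?P"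
      using permutes_compose[OF _ \<pi>] permutes_compose[OF _ permutes_inv[OF \<pi>]] by auto
  qed
  have "levi_civita n (\<lambda>i. \<pi> (t i)) =
      (\<Sum>\<tau>\<in>?P. of_int (sign (\<pi> \<circ> \<tau>)) * (\<Prod>i\<le>n. of_bool (\<pi> (t i) = (\<pi> \<circ> \<tau>) i)))"
    unfolding levi_civita_def by (rule sum.reindex_bij_betw[OF bij, symmetric])
  also have "\<dots> = (\<Sum>\<tau>\<in>?P. of_int (sign \<pi>) * (of_int (sign \<tau>) * (\<Prod>i\<le>n. of_bool (t i = \<tau> i))))"
  proof (rule sum.cong[OF refl])
    fix \<tau> assume "\<tau> \<in> ?P"
    then have "sign (\<pi> \<circ> \<tau>) = sign \<pi> * sign \<tau>"
      using sign_compose permutation_permutes \<pi> by blast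
    moreover have "\<pi> (t i) = \<pi> (\<tau> i) \<longleftrightarrow> t i = \<tau> i" for i
      using permutes_inj[OF \<pi>] by (auto dest: injD)
    ultimately show "of_int (sign (\<pi> \<circ> \<tau>)) * (\<Prod>i\<le>n. of_bool (\<pi> (t i) = (\<pi> \<circ> \<tau>) i)) =
      (of_int (sign \<pi>) * (of_int (sign \<tau>) * (\<Prod>i\<le>n. of_bool (t i = \<tau> i))) :: complex)"
      by simp
  qed
  also have "\<dots> = of_int (sign \<pi>) * levi_civita n t"
    unfolding levi_civita_def by (simp add: sum_distrib_left)
  finally show ?thesis .
qed

lemma norm_levi_civita_le: "norm (levi_civita n t) \<le> card {\<tau>. \<tau> permutes {..n}}"
proof -
  have "norm (levi_civita n t) \<le> (\<Sum>\<tau>\<in>{\<tau>. \<tau> permutes {..n}}. 1)"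
    unfolding levi_civita_def
  proof (rule sum_norm_le)
    fix \<tau> :: "nat \<Rightarrow> nat"
    have "norm (\<Prod>i\<le>n. (of_bool (t i = \<tau> i) :: complex)) = (\<Prod>i\<le>n. norm (of_bool (t i = \<tau> i) :: complex))"
      by (simp add: prod_norm)
    also have "\<dots> \<le> 1" by (rule prod_le_1) auto
    finally
    show "norm (of_int (sign \<tau>) * (\<Prod>i\<le>n. (of_bool (t i = \<tau> i) :: complex))) \<le> 1"
      by (simp add: norm_mult sign_def)
  qed
  then show ?thesis by simp
qed

lemma levi_civita_nonzero_imp_surj:
  assumes "levi_civita n t \<noteq> 0"
  shows "{..n} \<subseteq> t ` {..n}"
proof -
  obtain \<tau> where \<tau>: "\<tau> permutes {..n}" "\<forall>i\<le>n. t i = \<tau> i"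
  proof (rule ccontr)
    assume "\<not> thesis"
    then have "\<forall>\<tau>. \<tau> permutes {..n} \<longrightarrow> (\<exists>i\<le>n. t i \<noteq> \<tau> i)" using that by blast
    then have "levi_civita n t = 0"
      unfolding levi_civita_def by (intro sum.neutral ballI) (force intro: prod_zero)
    then show False using assms by simp
  qed
  then have "t ` {..n} = \<tau> ` {..n}" by (intro image_cong) auto
  then show ?thesis using permutes_image[OF \<tau>(1)] by simp
qed

text \<open>The labels of the \<open>i\<close>-th simplex \<open>(0,0),\<dots>,(i,0),(i,1),\<dots>,(m,1)\<close> of the standard
  triangulation of the prism \<open>\<Delta>\<^sup>m \<times> \<Delta>\<^sup>1\<close>, labelled by \<open>l1\<close> on the bottom and \<open>l2\<close> on the top.\<close>
definition prism_labels :: "('a \<Rightarrow> nat) \<Rightarrow> ('a \<Rightarrow> nat) \<Rightarrow> nat \<Rightarrow> (nat \<Rightarrow> 'a) \<Rightarrow> nat \<Rightarrow> nat" where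
  "prism_labels l1 l2 i x j = (if j \<le> i then l1 (x j) else l2 (x (j - 1)))"

definition prism_cochain :: "nat \<Rightarrow> ('a \<Rightarrow> nat) \<Rightarrow> ('a \<Rightarrow> nat) \<Rightarrow> (nat \<Rightarrow> 'a) \<Rightarrow> complex" where
  "prism_cochain m l1 l2 x = (\<Sum>i\<le>m. (-1)^i * levi_civita (Suc m) (prism_labels l1 l2 i x))"

lemma prism_labels_face_sum:
  assumes l1: "\<And>p. l1 p \<le> Suc m" and l2: "\<And>p. l2 p \<le> Suc m" and i: "i \<le> Suc m"
  shows "(\<Sum>k\<in>{Suc i..Suc m}. (-1)^(i+k) * levi_civita (Suc m) (prism_labels l1 l2 i (face m k x)))
       - (\<Sum>k<i. (-1)^(i+k) * levi_civita (Suc m) (prism_labels l1 l2 (i - 1) (face m k x)))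
       = levi_civita (Suc m) (\<lambda>k. if k < i then l1 (x k) else l2 (x k))
       - levi_civita (Suc m) (\<lambda>k. if k < Suc i then l1 (x k) else l2 (x k))"
proof -
  let ?\<epsilon> = "levi_civita (Suc m)"
  define u where "u = prism_labels l1 l2 i x"
  define c where "c j = (-1)^(i+j) * ?\<epsilon> (\<lambda>k. u (if k < j then k else Suc k))" for j
  have "(\<Sum>j\<le>Suc (Suc m). c j) =
      (-1)^i * (\<Sum>j\<le>Suc (Suc m). (-1)^j * ?\<epsilon> (\<lambda>k. u (if k < j then k else Suc k)))"
    unfolding c_def sum_distrib_left by (simp add: power_add mult.assoc)
  also have "\<dots> = 0"
    using levi_civita_face_sum[of "Suc m" u] l1 l2 by (simp add: u_def prism_labels_def)
  finally have faces: "(\<Sum>j\<le>Suc (Suc m). c j) = 0" .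
  have "{..Suc (Suc m)} = {..<i} \<union> {i..Suc (Suc m)}" using i by auto
  then have "(\<Sum>j\<le>Suc (Suc m). c j) = (\<Sum>j<i. c j) + (\<Sum>j\<in>{i..Suc (Suc m)}. c j)"
    by (simp only:) (rule sum.union_disjoint; auto)
  also have "(\<Sum>j\<in>{i..Suc (Suc m)}. c j) = c i + (\<Sum>j\<in>{Suc i..Suc (Suc m)}. c j)"
    using i by (subst sum.atLeast_Suc_atMost) auto
  also have "(\<Sum>j\<in>{Suc i..Suc (Suc m)}. c j) = c (Suc i) + (\<Sum>j\<in>{Suc (Suc i)..Suc (Suc m)}. c j)"
    using i by (subst sum.atLeast_Suc_atMost) auto
  also have "(\<Sum>j\<in>{Suc (Suc i)..Suc (Suc m)}. c j) = (\<Sum>k\<in>{Suc i..Suc m}. c (Suc k))"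
    by (rule sum.shift_bounds_cl_Suc_ivl)
  finally have split: "(\<Sum>j\<le>Suc (Suc m). c j) =
      (\<Sum>j<i. c j) + (c i + (c (Suc i) + (\<Sum>k\<in>{Suc i..Suc m}. c (Suc k))))" .
  define Hi where "Hi = (\<Sum>k\<in>{Suc i..Suc m}. (-1)^(i+k) * ?\<epsilon> (prism_labels l1 l2 i (face m k x)))"
  define Lo where "Lo = (\<Sum>k<i. (-1)^(i+k) * ?\<epsilon> (prism_labels l1 l2 (i - 1) (face m k x)))"
  have "(\<Sum>j<i. c j) = Lo"
    unfolding Lo_def c_def using i
    by (intro sum.cong refl arg_cong[where f="\<lambda>z. _ * z"] levi_civita_cong)
      (auto simp: u_def prism_labels_def face_def)
  moreover have "(\<Sum>k\<in>{Suc i..Suc m}. c (Suc k)) = - Hi"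
    unfolding Hi_def sum_negf[symmetric]
  proof (rule sum.cong[OF refl])
    fix k assume "k \<in> {Suc i..Suc m}"
    then have "?\<epsilon> (\<lambda>r. u (if r < Suc k then r else Suc r)) = ?\<epsilon> (prism_labels l1 l2 i (face m k x))"
      by (intro levi_civita_cong) (auto simp: u_def prism_labels_def face_def)
    then show "c (Suc k) = - ((-1)^(i+k) * ?\<epsilon> (prism_labels l1 l2 i (face m k x)))"
      unfolding c_def by simp
  qed
  moreover have "c i = ?\<epsilon> (\<lambda>k. if k < i then l1 (x k) else l2 (x k))"
    unfolding c_def
    by (subst levi_civita_cong[where t'="\<lambda>k. if k < i then l1 (x k) else l2 (x k)"])
      (auto simp: u_def prism_labels_def)
  moreover have "c (Suc i) = - ?\<epsilon> (\<lambda>k. if k < Suc i then l1 (x k) else l2 (x k))"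
    unfolding c_def
    by (subst levi_civita_cong[where t'="\<lambda>k. if k < Suc i then l1 (x k) else l2 (x k)"])
      (auto simp: u_def prism_labels_def)
  ultimately have "0 = Lo + (?\<epsilon> (\<lambda>k. if k < i then l1 (x k) else l2 (x k))
      + (- ?\<epsilon> (\<lambda>k. if k < Suc i then l1 (x k) else l2 (x k)) + - Hi))"
    using faces split by (simp only:)
  then show ?thesis
    unfolding Hi_def[symmetric] Lo_def[symmetric] by (simp add: algebra_simps)
qed

lemma cobdry_prism_cochain:
  assumes l1: "\<And>p. l1 p \<le> Suc m" and l2: "\<And>p. l2 p \<le> Suc m"
  shows "cobdry m (prism_cochain m l1 l2) x
       = levi_civita (Suc m) (\<lambda>k. l2 (x k)) - levi_civita (Suc m) (\<lambda>k. l1 (x k))"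
proof -
  define P where "P i k = (-1)^(i+k) * levi_civita (Suc m) (prism_labels l1 l2 i (face m k x))" for i k
  define Q where "Q i k = (-1)^(i+k) * levi_civita (Suc m) (prism_labels l1 l2 (i - 1) (face m k x))" for i k
  define S where "S i = levi_civita (Suc m) (\<lambda>k. if k < i then l1 (x k) else l2 (x k))" for i
  have "cobdry m (prism_cochain m l1 l2) x = (\<Sum>i\<le>m. \<Sum>k\<le>Suc m. P i k)"
    unfolding cobdry_def prism_cochain_def P_def sum_distrib_left
    by (subst sum.swap) (simp add: power_add mult_ac)
  also have "\<dots> = (\<Sum>i\<le>m. \<Sum>k\<in>{Suc i..Suc m}. P i k) + (\<Sum>i\<le>m. \<Sum>k\<le>i. P i k)"
  proof -
    have "{..Suc m} = {..i} \<union> {Suc i..Suc m}" if "i \<le> m" for i using that by auto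
    then show ?thesis by (simp add: sum.union_disjoint sum.distrib[symmetric] add.commute)
  qed
  also have "(\<Sum>i\<le>m. \<Sum>k\<in>{Suc i..Suc m}. P i k) = (\<Sum>i\<le>Suc m. \<Sum>k\<in>{Suc i..Suc m}. P i k)"
    by simp
  also have "(\<Sum>i\<le>m. \<Sum>k\<le>i. P i k) = - (\<Sum>i\<le>Suc m. \<Sum>k<i. Q i k)"
    by (subst sum.atMost_Suc_shift) (simp add: lessThan_Suc_atMost sum_negf P_def Q_def)
  also have "(\<Sum>i\<le>Suc m. \<Sum>k\<in>{Suc i..Suc m}. P i k) + - (\<Sum>i\<le>Suc m. \<Sum>k<i. Q i k)
      = (\<Sum>i\<le>Suc m. S i - S (Suc i))"
    unfolding diff_conv_add_uminus[symmetric] sum_subtractf[symmetric]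
    by (intro sum.cong refl, unfold P_def Q_def S_def, rule prism_labels_face_sum[OF l1 l2]) simp
  also have "\<dots> = S 0 - S (Suc (Suc m))"
    by (rule sum_telescope)
  also have "S (Suc (Suc m)) = levi_civita (Suc m) (\<lambda>k. l1 (x k))"
    unfolding S_def by (rule levi_civita_cong) simp
  finally show ?thesis by (simp add: S_def)
qed

lemma prism_cochain_nonzero_imp_label:
  assumes "prism_cochain m l1 l2 x \<noteq> 0" and "c \<le> Suc m"
  shows "\<exists>k\<le>m. l1 (x k) = c \<or> l2 (x k) = c"
proof -
  obtain i where "i \<in> {..m}" "(-1)^i * levi_civita (Suc m) (prism_labels l1 l2 i x) \<noteq> 0"
    using assms(1) unfolding prism_cochain_def by (rule sum.not_neutral_contains_not_neutral)
  then have i: "i \<le> m" "levi_civita (Suc m) (prism_labels l1 l2 i x) \<noteq> 0" by auto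
  have "c \<in> prism_labels l1 l2 i x ` {..Suc m}"
    using levi_civita_nonzero_imp_surj[OF i(2)] assms(2) by auto
  then obtain j where j: "j \<le> Suc m" "prism_labels l1 l2 i x j = c" by auto
  show ?thesis
  proof (cases "j \<le> i")
    case True
    then show ?thesis using i j by (intro exI[of _ j]) (simp add: prism_labels_def)
  next
    case False
    then show ?thesis using j by (intro exI[of _ "j - 1"]) (simp add: prism_labels_def)
  qed
qed

lemma prism_cochain_borel_measurable:
  assumes "\<And>c. {p. l1 p = c} \<in> sets borel" and "\<And>c. {p. l2 p = c} \<in> sets borel"
  shows "prism_cochain m l1 l2 \<in> borel_measurable (PiM {..m} (\<lambda>_. borel))"
proof -
  have component: "(\<lambda>x. indicator {p. l p = c} (x k) :: complex) \<in> borel_measurable (PiM {..m} (\<lambda>_. borel))"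
    if "{p. l p = c} \<in> sets borel" "k \<le> m" for l :: "'a \<Rightarrow> nat" and c k
    using that(2) measurable_compose[OF measurable_component_singleton[of k "{..m}" "\<lambda>_. borel"]
        borel_measurable_indicator[OF that(1)]]
    by simp
  have "(\<lambda>x. of_bool (prism_labels l1 l2 i x k = c) :: complex) \<in> borel_measurable (PiM {..m} (\<lambda>_. borel))"
    if "i \<le> m" "k \<le> Suc m" for i k c
  proof (cases "k \<le> i")
    case True
    then show ?thesis using component[OF assms(1), of k] that
      by (simp add: prism_labels_def indicator_def)
  next
    case False
    then show ?thesis using component[OF assms(2), of "k - 1"] that
      by (simp add: prism_labels_def indicator_def)
  qed
  then show ?thesis
    unfolding prism_cochain_def[abs_def] levi_civita_def
    by (intro borel_measurable_sum borel_measurable_times borel_measurable_const borel_measurable_prod) auto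
qed

text \<open>The index of the set \<open>A\<^sub>i\<^sup>\<sigma>\<close> containing \<open>p\<close>; these sets partition the space.\<close>
definition region_label :: "nat \<Rightarrow> (nat \<Rightarrow> 'a set) \<Rightarrow> (nat \<Rightarrow> nat) \<Rightarrow> 'a \<Rightarrow> nat" where
  "region_label n X \<sigma> p = Max (insert 0 {i\<in>{1..n}. p \<notin> X (\<sigma> i)})"

lemma region_label_le: "region_label n X \<sigma> p \<le> n"
  unfolding region_label_def by (subst Max_le_iff) auto

lemma region_label_eq_0_iff: "region_label n X \<sigma> p = 0 \<longleftrightarrow> (\<forall>k\<in>{1..n}. p \<in> X (\<sigma> k))"
  unfolding region_label_def by (subst Max_eq_iff) auto

lemma region_label_notin:
  assumes "0 < region_label n X \<sigma> p"
  shows "p \<notin> X (\<sigma> (region_label n X \<sigma> p))"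
proof -
  have "region_label n X \<sigma> p \<in> insert 0 {i\<in>{1..n}. p \<notin> X (\<sigma> i)}"
    unfolding region_label_def by (rule Max_in) auto
  then show ?thesis using assms by auto
qed

lemma mem_Aset_iff_region_label:
  assumes "j \<le> n"
  shows "p \<in> Aset n X \<sigma> j \<longleftrightarrow> region_label n X \<sigma> p = j"
proof (cases "j = 0")
  case True
  then show ?thesis by (simp add: Aset_def region_label_eq_0_iff)
next
  case False
  let ?S = "insert 0 {i\<in>{1..n}. p \<notin> X (\<sigma> i)}"
  have "region_label n X \<sigma> p = j \<longleftrightarrow> j \<in> ?S \<and> (\<forall>a\<in>?S. a \<le> j)"
    unfolding region_label_def by (rule Max_eq_iff) auto
  also have "(\<forall>a\<in>?S. a \<le> j) \<longleftrightarrow> (\<forall>k\<in>{j+1..n}. p \<in> X (\<sigma> k))"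
  proof
    assume le: "\<forall>a\<in>?S. a \<le> j"
    show "\<forall>k\<in>{j+1..n}. p \<in> X (\<sigma> k)"
    proof (rule ballI, rule ccontr)
      fix k assume k: "k \<in> {j+1..n}" "p \<notin> X (\<sigma> k)"
      then have "k \<in> ?S" by simp
      then have "k \<le> j" using le by blast
      with k(1) show False by simp
    qed
  next
    assume inside: "\<forall>k\<in>{j+1..n}. p \<in> X (\<sigma> k)"
    show "\<forall>a\<in>?S. a \<le> j"
    proof
      fix a assume "a \<in> ?S"
      with inside show "a \<le> j" by (cases "a \<le> j") auto
    qed
  qed
  finally show ?thesis using False assms by (auto simp: Aset_def)
qed

lemma wedge_indicator_Aset:
  "wedge n (\<lambda>i. indicator (Aset n X \<sigma> i)) x = levi_civita n (\<lambda>i. region_label n X \<sigma> (x i))"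
  unfolding wedge_def levi_civita_def
proof (intro sum.cong refl arg_cong[where f="\<lambda>z. _ * z"] prod.cong)
  fix \<tau> i assume "\<tau> \<in> {\<tau>. \<tau> permutes {..n}}" "i \<in> {..n}"
  then have "\<tau> i \<le> n" using permutes_in_image by fastforce
  then show "indicator (Aset n X \<sigma> (\<tau> i)) (x i) = (of_bool (region_label n X \<sigma> (x i) = \<tau> i) :: complex)"
    by (simp add: indicator_def mem_Aset_iff_region_label)
qed

lemma wedge_indicator_Aset_relabel:
  assumes "\<tau> permutes {1..n}"
  shows "of_int (sign \<tau>) * wedge n (\<lambda>i. indicator (Aset n X \<sigma> i)) x
       = levi_civita n (\<lambda>k. Hilbert_Choice.inv \<tau> (region_label n X \<sigma> (x k)))"
proof -
  have "Hilbert_Choice.inv \<tau> permutes {..n}"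
    using permutes_inv[OF permutes_subset[OF assms]] by auto
  moreover have "sign (Hilbert_Choice.inv \<tau>) = sign \<tau>"
    using sign_inverse[OF permutes_imp_permutation[OF _ assms]] by simp
  ultimately show ?thesis
    using levi_civita_permute[of "Hilbert_Choice.inv \<tau>" n "\<lambda>k. region_label n X \<sigma> (x k)"]
    by (simp add: wedge_indicator_Aset)
qed

lemma Aset_borel:
  assumes X: "\<forall>i\<in>{1..n}. X i \<in> sets borel" and \<sigma>: "\<sigma> permutes {1..n}" and j: "j \<le> n"
  shows "Aset n X \<sigma> j \<in> sets borel"
proof -
  have X\<sigma>: "X (\<sigma> k) \<in> sets borel" if "k \<in> {1..n}" for k
    using X permutes_in_image[OF \<sigma>] that by auto
  have inter: "(\<Inter>k\<in>A. X (\<sigma> k)) \<in> sets borel" if "A \<subseteq> {1..n}" for A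
  proof (cases "A = {}")
    case False
    then show ?thesis using that finite_subset[OF that] X\<sigma> by (intro sets.finite_INT) auto
  qed simp
  show ?thesis
    using inter[of "{1..n}"] inter[of "{j+1..n}"] X\<sigma>[of j] j
    unfolding Aset_def by (auto intro!: sets.Int borel_comp)
qed

lemma region_label_fibre_borel:
  assumes "\<forall>i\<in>{1..n}. X i \<in> sets borel" and "\<sigma> permutes {1..n}"
  shows "{p. region_label n X \<sigma> p = c} \<in> sets borel"
proof (cases "c \<le> n")
  case True
  then have "{p. region_label n X \<sigma> p = c} = Aset n X \<sigma> c"
    by (auto simp: mem_Aset_iff_region_label)
  then show ?thesis using Aset_borel[OF assms True] by simp
next
  case False
  then have "region_label n X \<sigma> p \<noteq> c" for p
    using region_label_le[of n X \<sigma> p] by simp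
  then have "{p. region_label n X \<sigma> p = c} = {}" by simp
  then show ?thesis by simp
qed

definition adapted_labelling ::
    "nat \<Rightarrow> (nat \<Rightarrow> 'a::topological_space set) \<Rightarrow> (nat \<Rightarrow> nat) \<Rightarrow> ('a \<Rightarrow> nat) \<Rightarrow> bool" where
  "adapted_labelling N X \<sigma> l \<longleftrightarrow>
     (\<forall>p. l p \<le> N) \<and> (\<forall>c. {p. l p = c} \<in> sets borel) \<and>
     (\<forall>p. l p = 0 \<longrightarrow> (\<forall>j\<in>{1..N}. p \<in> X j)) \<and> (\<forall>p. 0 < l p \<longrightarrow> p \<notin> X (\<sigma> (l p)))"

lemma adapted_labellingD:
  assumes "adapted_labelling N X \<sigma> l"
  shows "l p \<le> N" and "{p. l p = c} \<in> sets borel"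
    and "l p = 0 \<Longrightarrow> j \<in> {1..N} \<Longrightarrow> p \<in> X j"
    and "0 < l p \<Longrightarrow> p \<notin> X (\<sigma> (l p))"
  using assms unfolding adapted_labelling_def by auto

lemma adapted_labelling_region_label:
  assumes "\<forall>i\<in>{1..N}. X i \<in> sets borel" and \<sigma>: "\<sigma> permutes {1..N}"
  shows "adapted_labelling N X \<sigma> (region_label N X \<sigma>)"
proof -
  have zero: "p \<in> X j" if "region_label N X \<sigma> p = 0" "j \<in> {1..N}" for p j
  proof -
    have "j \<in> \<sigma> ` {1..N}" using permutes_image[OF \<sigma>] that(2) by simp
    then show ?thesis using that(1) by (auto simp: region_label_eq_0_iff)
  qed
  show ?thesis
    unfolding adapted_labelling_def
    by (intro conjI allI impI ballI region_label_le region_label_notin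
        region_label_fibre_borel[OF assms] zero)
qed

lemma adapted_labelling_permute:
  assumes l: "adapted_labelling N X \<sigma> l" and \<tau>: "\<tau> permutes {1..N}"
  shows "adapted_labelling N X (\<sigma> \<circ> \<tau>) (Hilbert_Choice.inv \<tau> \<circ> l)"
proof -
  let ?\<iota> = "Hilbert_Choice.inv \<tau>"
  have \<iota>_eq: "?\<iota> y = c \<longleftrightarrow> y = \<tau> c" for y c
    using permutes_inv_eq[OF \<tau>] by metis
  have \<iota>_0: "?\<iota> y = 0 \<longleftrightarrow> y = 0" for y
    using \<iota>_eq[of y 0] permutes_not_in[OF \<tau>, of 0] by simp
  have "?\<iota> (l p) \<le> N" for p
  proof (cases "l p = 0")
    case False
    then have "l p \<in> {1..N}" using l by (simp add: adapted_labelling_def)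
    then show ?thesis using permutes_in_image[OF permutes_inv[OF \<tau>]] by auto
  qed (simp add: \<iota>_0[of 0, simplified])
  moreover have "{p. ?\<iota> (l p) = c} \<in> sets borel" for c
    using l by (simp add: \<iota>_eq adapted_labelling_def)
  moreover have "p \<in> X j" if "?\<iota> (l p) = 0" "j \<in> {1..N}" for p j
    using l that by (simp add: \<iota>_0 adapted_labelling_def)
  moreover have "p \<notin> X (\<sigma> (\<tau> (?\<iota> (l p))))" if "0 < ?\<iota> (l p)" for p
  proof -
    have "0 < l p" using that \<iota>_0[of "l p"] by auto
    then show ?thesis using l by (simp add: permutes_inverses(1)[OF \<tau>] adapted_labelling_def)
  qed
  ultimately show ?thesis
    unfolding adapted_labelling_def by simp
qed

lemma dmax_le_iff: "dmax n x y \<le> r \<longleftrightarrow> (\<forall>k\<le>n. dist (x k) (y k) \<le> r)"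
  unfolding dmax_def by (subst Max_le_iff) auto

lemma mem_thick: "y \<in> Y \<Longrightarrow> dist p y \<le> R \<Longrightarrow> p \<in> thick Y R"
  unfolding thick_def using infdist_le[of y Y p] by auto

text \<open>A diagonal point near such a tuple lies coarsely on both sides of every \<open>X\<^sub>j\<close>, hence in a
  bounded set.\<close>
lemma bounded_prod_straddling:
  fixes X :: "nat \<Rightarrow> 'a::metric_space set"
  assumes "coarsely_transverse N X" and "0 \<le> R"
  shows "bounded_prod m {x \<in> diag_thick m R. \<forall>j\<in>{1..N}. (\<exists>k\<le>m. x k \<in> X j) \<and> (\<exists>k\<le>m. x k \<notin> X j)}"
proof -
  define K where "K = (\<Inter>j\<in>{1..N}. thick (X j) R \<inter> thick (- X j) R)"
  have "bounded K" using assms unfolding coarsely_transverse_def K_def by blast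
  then obtain e where e: "\<forall>y\<in>K. dist undefined y \<le> e" using bounded_any_center by blast
  define z0 :: "nat \<Rightarrow> 'a" where "z0 = restrict (\<lambda>_. undefined) {..m}"
  have "dmax m x z0 \<le> R + e"
    if x: "x \<in> {x \<in> diag_thick m R. \<forall>j\<in>{1..N}. (\<exists>k\<le>m. x k \<in> X j) \<and> (\<exists>k\<le>m. x k \<notin> X j)}" for x
  proof -
    obtain z where z: "\<forall>k\<le>m. dist z (x k) \<le> R"
      using x unfolding diag_thick_def dmax_le_iff by (auto simp: dist_commute)
    have "z \<in> thick (X j) R \<inter> thick (- X j) R" if j: "j \<in> {1..N}" for j
    proof -
      obtain k k' where "k \<le> m" "x k \<in> X j" "k' \<le> m" "x k' \<in> - X j" using x j by blast
      then show ?thesis using z mem_thick[of "x k" "X j" z R] mem_thick[of "x k'" "- X j" z R] by simp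
    qed
    then have "z \<in> K" unfolding K_def by blast
    then have "dist z undefined \<le> e" using e by (metis dist_commute)
    then have "dist (x k) undefined \<le> R + e" if "k \<le> m" for k
      using dist_triangle[of "x k" undefined z] z[rule_format, OF that] by (simp add: dist_commute)
    then show ?thesis unfolding dmax_le_iff z0_def by simp
  qed
  moreover have "z0 \<in> prodsp m" unfolding z0_def prodsp_def by simp
  ultimately show ?thesis unfolding bounded_prod_def by blast
qed

lemma prism_cochain_in_CX:
  fixes X :: "nat \<Rightarrow> 'a::metric_space set"
  assumes X: "coarsely_transverse (Suc m) X" and \<sigma>: "\<sigma> permutes {1..Suc m}"
    and l1: "adapted_labelling (Suc m) X \<sigma> l1" and l2: "adapted_labelling (Suc m) X \<sigma> l2"
  shows "prism_cochain m l1 l2 \<in> CX m"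
proof -
  have "prism_cochain m l1 l2 \<in> borel_measurable (PiM {..m} (\<lambda>_. borel))"
    using adapted_labellingD(2)[OF l1] adapted_labellingD(2)[OF l2]
    by (rule prism_cochain_borel_measurable)
  moreover have "norm (prism_cochain m l1 l2 x) \<le> (\<Sum>i\<le>m. real (card {\<tau>. \<tau> permutes {..Suc m}}))" for x
    unfolding prism_cochain_def
    by (rule sum_norm_le) (simp add: norm_mult norm_power norm_levi_civita_le)
  then have "locally_bounded_prod m (prism_cochain m l1 l2)"
    unfolding locally_bounded_prod_def by blast
  moreover have "bounded_prod m ({x \<in> prodsp m. prism_cochain m l1 l2 x \<noteq> 0} \<inter> diag_thick m R)"
    if R: "R > 0" for R
  proof -
    have straddle: "(\<exists>k\<le>m. x k \<in> X j) \<and> (\<exists>k\<le>m. x k \<notin> X j)"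
      if x: "prism_cochain m l1 l2 x \<noteq> 0" and j: "j \<in> {1..Suc m}" for x j
    proof
      obtain k where k: "k \<le> m" "l1 (x k) = 0 \<or> l2 (x k) = 0"
        using prism_cochain_nonzero_imp_label[OF x, of 0] by auto
      then have "x k \<in> X j"
        using adapted_labellingD(3)[OF l1 _ j] adapted_labellingD(3)[OF l2 _ j] by blast
      with k(1) show "\<exists>k\<le>m. x k \<in> X j" by blast
    next
      define c where "c = Hilbert_Choice.inv \<sigma> j"
      have c: "c \<in> {1..Suc m}" "\<sigma> c = j"
        using j permutes_in_image[OF permutes_inv[OF \<sigma>]] permutes_inverses(1)[OF \<sigma>]
        unfolding c_def by auto
      obtain k where k: "k \<le> m" "l1 (x k) = c \<or> l2 (x k) = c"
        using prism_cochain_nonzero_imp_label[OF x, of c] c(1) by auto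
      then have "x k \<notin> X (\<sigma> c)"
        using adapted_labellingD(4)[OF l1, of "x k"] adapted_labellingD(4)[OF l2, of "x k"] c(1) by auto
      with k(1) c(2) show "\<exists>k\<le>m. x k \<notin> X j" by blast
    qed
    obtain z r where z: "z \<in> prodsp m"
      and r: "\<forall>x\<in>{x \<in> diag_thick m R. \<forall>j\<in>{1..Suc m}. (\<exists>k\<le>m. x k \<in> X j) \<and> (\<exists>k\<le>m. x k \<notin> X j)}.
             dmax m x z \<le> r"
      using bounded_prod_straddling[OF X less_imp_le[OF R], of m] unfolding bounded_prod_def by blast
    show ?thesis
      unfolding bounded_prod_def
    proof (intro bexI[OF _ z] exI[of _ r] ballI)
      fix x assume "x \<in> {x \<in> prodsp m. prism_cochain m l1 l2 x \<noteq> 0} \<inter> diag_thick m R"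
      then show "dmax m x z \<le> r" using straddle r by blast
    qed
  qed
  ultimately show ?thesis unfolding CX_def by blast
qed

lemma same_class_adapted_labellings:
  fixes X :: "nat \<Rightarrow> 'a::metric_space set"
  assumes "coarsely_transverse (Suc m) X" and "\<sigma> permutes {1..Suc m}"
    and l1: "adapted_labelling (Suc m) X \<sigma> l1" and l2: "adapted_labelling (Suc m) X \<sigma> l2"
  shows "same_class (Suc m) (\<lambda>x. levi_civita (Suc m) (\<lambda>k. l2 (x k)))
           (\<lambda>x. levi_civita (Suc m) (\<lambda>k. l1 (x k)))"
proof -
  have b1: "\<And>p. l1 p \<le> Suc m" and b2: "\<And>p. l2 p \<le> Suc m"
    using adapted_labellingD(1)[OF l1] adapted_labellingD(1)[OF l2] by blast+
  show ?thesis
    unfolding same_class_def using prism_cochain_in_CX[OF assms] cobdry_prism_cochain[of l1 m l2, OF b1 b2]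
    by (auto intro!: bexI[of _ "prism_cochain m l1 l2"])
qed

theorem proposition5p7:
  fixes n :: nat and X :: "nat \<Rightarrow> 'a::heine_borel set" and \<sigma> :: "nat \<Rightarrow> nat"
  assumes "coarsely_transverse n X"
    and "\<sigma> permutes {1..n}"
  shows "same_class n
           (wedge n (\<lambda>i. indicator (Aset n X \<sigma> i)))
           (\<lambda>x. of_int (sign \<sigma>) * wedge n (\<lambda>i. indicator (Aset n X id i)) x)"
proof (cases n)
  case 0
  then show ?thesis using assms(2) by (simp add: same_class_def)
next
  case (Suc m)
  have X: "\<forall>i\<in>{1..n}. X i \<in> sets borel" using assms(1) by (simp add: coarsely_transverse_def)
  have "adapted_labelling n X \<sigma> (Hilbert_Choice.inv \<sigma> \<circ> region_label n X id)"
    using adapted_labelling_permute[OF adapted_labelling_region_label[OF X permutes_id] assms(2)]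
    by simp
  moreover have "adapted_labelling n X \<sigma> (region_label n X \<sigma>)"
    using X assms(2) by (rule adapted_labelling_region_label)
  ultimately have classes: "same_class n (\<lambda>x. levi_civita n (\<lambda>k. region_label n X \<sigma> (x k)))
      (\<lambda>x. levi_civita n (\<lambda>k. Hilbert_Choice.inv \<sigma> (region_label n X id (x k))))"
    using same_class_adapted_labellings[of m X \<sigma> "Hilbert_Choice.inv \<sigma> \<circ> region_label n X id"]
      assms unfolding Suc by simp
  have "wedge n (\<lambda>i. indicator (Aset n X \<sigma> i)) = (\<lambda>x. levi_civita n (\<lambda>k. region_label n X \<sigma> (x k)))"
    by (rule ext) (rule wedge_indicator_Aset)
  with classes show ?thesis
    unfolding wedge_indicator_Aset_relabel[OF assms(2)] by simp
qed

end
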